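(* Let $M$ be a finite-dimensional left $\mathsf{VBr}_{r,t}(\omega)$-module, decomposed as $M=\bigoplus_{\mathbf a\in\mathrm{Seq}_{r,t},\,\mathbf i\in\mathbb C^{r+t}}1_{\mathbf a}M_{\mathbf i}$. Then for all $k\in\{1,\dots,r+t-1\}$, $\mathbf a\in\mathrm{Seq}_{r,t}$ and $\mathbf i\in\mathbb C^{r+t}$, $$s_k1_{\mathbf a}M_{\mathbf i}\subseteq 1_{\mathbf a}M_{\mathbf i}+1_{\mathbf a}M_{\mathsf s_k\mathbf i}.$$
   Context: $\mathrm{Seq}_{r,t}$: sequences $\mathbf a\in\{\wedge,\vee\}^{r+t}$ with exactly $r$ entries $\wedge$; $J=\{1,\dots,r+t-1\}$; $\mathsf s_k$ swaps entries $k,k+1$ of a sequence (also of $\mathbf i\in\mathbb C^{r+t}$). $\mathrm{Br}_{r,t}(\gamma)$: basis oriented Brauer diagrams $\mathbf a\to\mathbf b$ (perfect matchings between bottom row labelled $\mathbf a$ and top row labelled $\mathbf b$; bottom-to-top strands join equal labels, strands within a row join different labels), product by stacking (second factor below), $0$ if labels mismatch, loops replaced by $\gamma$. $1_{\mathbf a}$ identity; for $k\in J$: if $a_k=a_{k+1}$, $s_k1_{\mathbf a}$ crosses strands $k,k+1$ ($\mathbf a\to\mathbf a$); if $a_k\neq a_{k+1}$, $\hat s_k1_{\mathbf a}$ crossing $\mathbf a\to\mathsf s_k\mathbf a$, $e_k1_{\mathbf a}$ cap at bottom $k,k+1$ and cup at top $k,k+1$ ($\mathbf a\to\mathbf a$),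 $\hat e_k1_{\mathbf a}$ same shape $\mathbf a\to\mathsf s_k\mathbf a$; these are $0$ when the condition fails; $s_k=\sum_{\mathbf a}s_k1_{\mathbf a}$ etc. For $\omega=(\omega_j)_{j\ge0}\subset\mathbb C$, $\mathsf{VBr}_{r,t}(\omega)$ is the quotient of the free product $\mathrm{Br}_{r,t}(\omega_0)*\mathbb C[y_1,\dots,y_{r+t}]$ by: $y_i$ commutes with all $1_{\mathbf a}$, and with $s_k,\hat s_k,e_k,\hat e_k$ when $i\notin\{k,k+1\}$; $e_1y_1^je_11_{\mathbf a}=\omega_je_11_{\mathbf a}$ for $j\ge0$ and $(a_1,a_2)=(\wedge,\vee)$; for $a_k=a_{k+1}$: $s_ky_k1_{\mathbf a}-y_{k+1}s_k1_{\mathbf a}=-1_{\mathbf a}$, $s_ky_{k+1}1_{\mathbf a}-y_ks_k1_{\mathbf a}=1_{\mathbf a}$; $\hat s_ky_k-y_{k+1}\hat s_k=\hat e_k$, $\hat s_ky_{k+1}-y_k\hat s_k=-\hat e_k$; $e_k(y_k+y_{k+1})=(y_k+y_{k+1})e_k=\hat e_k(y_k+y_{k+1})=(y_k+y_{k+1})\hat e_k=0$. For a finite-dimensional module $M$: $1_{\mathbf a}M_{\mathbf i}=\{v\in1_{\mathbf a}M:(y_k-\mathrm i_k)^Nv=0\ \forall k, \text{ for } N\gg0\}$. *)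

theory Defs
  imports Complex_Main
begin

(* A sequence a in {up,down}^n is a bool list of length n; True = \<and> (up), False = \<or> (down).
   Positions are 1-based: entry k of a sequence is  a ! (k - 1).
   A point of a Brauer diagram is (row, i) with row = False (bottom) / True (top), 1 \<le> i \<le> n. *)

definition Seq :: "nat \<Rightarrow> nat \<Rightarrow> bool list set" where
  "Seq r t = {a. length a = r + t \<and> length (filter id a) = r}"

definition swapL :: "nat \<Rightarrow> 'x list \<Rightarrow> 'x list" where
  "swapL k xs = xs[k - 1 := xs ! k, k := xs ! (k - 1)]"

type_synonym pt = "bool \<times> nat"

(* oriented Brauer diagram: (bottom labels, top labels, perfect matching as an involution) *)
type_synonym diag = "bool list \<times> bool list \<times> (pt \<Rightarrow> pt)"

definition pts :: "nat \<Rightarrow> pt set" where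
  "pts n = {p. 1 \<le> snd p \<and> snd p \<le> n}"

definition lab :: "bool list \<Rightarrow> bool list \<Rightarrow> pt \<Rightarrow> bool" where
  "lab a b p = (if fst p then b ! (snd p - 1) else a ! (snd p - 1))"

definition dbot :: "diag \<Rightarrow> bool list" where "dbot d = fst d"
definition dtop :: "diag \<Rightarrow> bool list" where "dtop d = fst (snd d)"
definition dmat :: "diag \<Rightarrow> pt \<Rightarrow> pt" where "dmat d = snd (snd d)"

(* basis diagrams a \<rightarrow> b of Br_{r,t}; the matching is normalised to be the identity
   outside the 2n points, so that diagrams are equal iff they are equal as pictures *)
definition is_diag :: "nat \<Rightarrow> nat \<Rightarrow> diag \<Rightarrow> bool" where
  "is_diag r t d \<longleftrightarrow>
     dbot d \<in> Seq r t \<and> dtop d \<in> Seq r t \<and>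
     (\<forall>p. p \<notin> pts (r + t) \<longrightarrow> dmat d p = p) \<and>
     (\<forall>p \<in> pts (r + t). dmat d p \<in> pts (r + t) \<and> dmat d p \<noteq> p \<and> dmat d (dmat d p) = p \<and>
        (fst p = fst (dmat d p) \<longleftrightarrow> lab (dbot d) (dtop d) p \<noteq> lab (dbot d) (dtop d) (dmat d p)))"

(* Stacking d1 (on top) over d2 (below).  Levels: 0 = bottom of d2,
   1 = middle (top of d2 = bottom of d1), 2 = top of d1. *)
definition stack_edges :: "diag \<Rightarrow> diag \<Rightarrow> ((nat \<times> nat) \<times> (nat \<times> nat)) set" where
  "stack_edges d1 d2 =
     (let n = length (dbot d2);
          L0 = (\<lambda>p::pt. (if fst p then 1::nat else 0, snd p));
          L1 = (\<lambda>p::pt. (if fst p then 2::nat else 1, snd p))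
      in {(L0 p, L0 (dmat d2 p)) | p. p \<in> pts n} \<union> {(L1 p, L1 (dmat d1 p)) | p. p \<in> pts n})"

definition stack_conn :: "diag \<Rightarrow> diag \<Rightarrow> ((nat \<times> nat) \<times> (nat \<times> nat)) set" where
  "stack_conn d1 d2 = (stack_edges d1 d2)\<^sup>*"

definition outer :: "pt \<Rightarrow> nat \<times> nat" where
  "outer p = (if fst p then (2, snd p) else (0, snd p))"

definition dcomp :: "diag \<Rightarrow> diag \<Rightarrow> diag" where
  "dcomp d1 d2 =
     (dbot d2, dtop d1,
      \<lambda>p. if p \<in> pts (length (dbot d2))
          then (THE q. q \<in> pts (length (dbot d2)) \<and> q \<noteq> p \<and> (outer p, outer q) \<in> stack_conn d1 d2)
          else p)"

(* number of closed loops created by stacking *)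
definition nloops :: "diag \<Rightarrow> diag \<Rightarrow> nat" where
  "nloops d1 d2 =
     card {stack_conn d1 d2 `` {x} | x.
             x \<in> {(1, i) | i. 1 \<le> i \<and> i \<le> length (dbot d2)} \<and>
             \<not> (\<exists>q \<in> pts (length (dbot d2)). (x, outer q) \<in> stack_conn d1 d2)}"

definition idd :: "bool list \<Rightarrow> diag" where
  "idd a = (a, a, \<lambda>p. if p \<in> pts (length a) then (\<not> fst p, snd p) else p)"

definition sw :: "nat \<Rightarrow> nat \<Rightarrow> nat" where
  "sw k i = (if i = k then k + 1 else if i = k + 1 then k else i)"

definition cross_mat :: "nat \<Rightarrow> nat \<Rightarrow> pt \<Rightarrow> pt" where
  "cross_mat n k p = (if p \<in> pts n then (\<not> fst p, sw k (snd p)) else p)"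

definition capcup_mat :: "nat \<Rightarrow> nat \<Rightarrow> pt \<Rightarrow> pt" where
  "capcup_mat n k p = (if p \<in> pts n then
       (if snd p = k then (fst p, k + 1) else if snd p = k + 1 then (fst p, k) else (\<not> fst p, snd p))
     else p)"

definition sdiag :: "nat \<Rightarrow> bool list \<Rightarrow> diag" where
  "sdiag k a = (a, a, cross_mat (length a) k)"
definition shdiag :: "nat \<Rightarrow> bool list \<Rightarrow> diag" where
  "shdiag k a = (a, swapL k a, cross_mat (length a) k)"
definition ediag :: "nat \<Rightarrow> bool list \<Rightarrow> diag" where
  "ediag k a = (a, a, capcup_mat (length a) k)"
definition ehdiag :: "nat \<Rightarrow> bool list \<Rightarrow> diag" where
  "ehdiag k a = (a, swapL k a, capcup_mat (length a) k)"

(* action of 1_a, s_k, \<hat>s_k, e_k, \<hat>e_k (the latter as sums over a) *)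
definition Pa :: "(diag \<Rightarrow> 'm \<Rightarrow> 'm) \<Rightarrow> bool list \<Rightarrow> 'm \<Rightarrow> 'm" where
  "Pa \<rho> a = \<rho> (idd a)"

definition Sop :: "nat \<Rightarrow> nat \<Rightarrow> (diag \<Rightarrow> 'm \<Rightarrow> 'm::ab_group_add) \<Rightarrow> nat \<Rightarrow> 'm \<Rightarrow> 'm" where
  "Sop r t \<rho> k v = (\<Sum>a\<in>Seq r t. if a ! (k - 1) = a ! k then \<rho> (sdiag k a) v else 0)"
definition Shop :: "nat \<Rightarrow> nat \<Rightarrow> (diag \<Rightarrow> 'm \<Rightarrow> 'm::ab_group_add) \<Rightarrow> nat \<Rightarrow> 'm \<Rightarrow> 'm" where
  "Shop r t \<rho> k v = (\<Sum>a\<in>Seq r t. if a ! (k - 1) \<noteq> a ! k then \<rho> (shdiag k a) v else 0)"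
definition Eop :: "nat \<Rightarrow> nat \<Rightarrow> (diag \<Rightarrow> 'm \<Rightarrow> 'm::ab_group_add) \<Rightarrow> nat \<Rightarrow> 'm \<Rightarrow> 'm" where
  "Eop r t \<rho> k v = (\<Sum>a\<in>Seq r t. if a ! (k - 1) \<noteq> a ! k then \<rho> (ediag k a) v else 0)"
definition Ehop :: "nat \<Rightarrow> nat \<Rightarrow> (diag \<Rightarrow> 'm \<Rightarrow> 'm::ab_group_add) \<Rightarrow> nat \<Rightarrow> 'm \<Rightarrow> 'm" where
  "Ehop r t \<rho> k v = (\<Sum>a\<in>Seq r t. if a ! (k - 1) \<noteq> a ! k then \<rho> (ehdiag k a) v else 0)"

definition commute_ops :: "('m \<Rightarrow> 'm) \<Rightarrow> ('m \<Rightarrow> 'm) \<Rightarrow> bool" where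
  "commute_ops f g \<longleftrightarrow> (\<forall>v. f (g v) = g (f v))"

(* A finite-dimensional left VBr_{r,t}(\<omega>)-module: a finite-dimensional complex vector space
   ('m, scale) with an action \<rho> of the basis diagrams of Br_{r,t}(\<omega> 0) (i.e. an algebra map
   Br_{r,t}(\<omega> 0) \<rightarrow> End M, unital), commuting operators y 1, ..., y (r+t) (a C[y]-module),
   subject to the defining relations of VBr_{r,t}(\<omega>). *)
definition vbr_module ::
  "nat \<Rightarrow> nat \<Rightarrow> (nat \<Rightarrow> complex) \<Rightarrow> (complex \<Rightarrow> 'm::ab_group_add \<Rightarrow> 'm)
     \<Rightarrow> (diag \<Rightarrow> 'm \<Rightarrow> 'm) \<Rightarrow> (nat \<Rightarrow> 'm \<Rightarrow> 'm) \<Rightarrow> bool" where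
  "vbr_module r t \<omega> scale \<rho> y \<longleftrightarrow>
     (let n = r + t; J = {1..<r + t};
          P = Pa \<rho>; S = Sop r t \<rho>; Sh = Shop r t \<rho>; E = Eop r t \<rho>; Eh = Ehop r t \<rho> in
     vector_space scale \<and>
     (\<exists>B. finite B \<and> module.span scale B = UNIV) \<and>
     \<comment> \<open>Br-module structure\<close>
     (\<forall>d. is_diag r t d \<longrightarrow> Vector_Spaces.linear scale scale (\<rho> d)) \<and>
     (\<forall>d1 d2. is_diag r t d1 \<and> is_diag r t d2 \<longrightarrow>
        (\<forall>v. \<rho> d1 (\<rho> d2 v) =
              (if dbot d1 = dtop d2 then scale ((\<omega> 0) ^ nloops d1 d2) (\<rho> (dcomp d1 d2) v) else 0))) \<and>
     (\<forall>v. (\<Sum>a\<in>Seq r t. P a v) = v) \<and>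
     \<comment> \<open>C[y_1,...,y_n]-module structure\<close>
     (\<forall>i\<in>{1..n}. Vector_Spaces.linear scale scale (y i)) \<and>
     (\<forall>i\<in>{1..n}. \<forall>j\<in>{1..n}. commute_ops (y i) (y j)) \<and>
     \<comment> \<open>relations\<close>
     (\<forall>i\<in>{1..n}. \<forall>a\<in>Seq r t. commute_ops (y i) (P a)) \<and>
     (\<forall>i\<in>{1..n}. \<forall>k\<in>J. i \<noteq> k \<and> i \<noteq> k + 1 \<longrightarrow>
        commute_ops (y i) (S k) \<and> commute_ops (y i) (Sh k) \<and>
        commute_ops (y i) (E k) \<and> commute_ops (y i) (Eh k)) \<and>
     (\<forall>j. \<forall>a\<in>Seq r t. 2 \<le> n \<and> a ! 0 \<and> \<not> a ! 1 \<longrightarrow>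
        (\<forall>v. E 1 ((y 1 ^^ j) (E 1 (P a v))) = scale (\<omega> j) (E 1 (P a v)))) \<and>
     (\<forall>k\<in>J. \<forall>a\<in>Seq r t. a ! (k - 1) = a ! k \<longrightarrow>
        (\<forall>v. S k (y k (P a v)) - y (k + 1) (S k (P a v)) = - P a v \<and>
             S k (y (k + 1) (P a v)) - y k (S k (P a v)) = P a v)) \<and>
     (\<forall>k\<in>J. \<forall>v. Sh k (y k v) - y (k + 1) (Sh k v) = Eh k v \<and>
                 Sh k (y (k + 1) v) - y k (Sh k v) = - Eh k v) \<and>
     (\<forall>k\<in>J. \<forall>v. E k (y k v + y (k + 1) v) = 0 \<and> y k (E k v) + y (k + 1) (E k v) = 0 \<and>
                 Eh k (y k v + y (k + 1) v) = 0 \<and> y k (Eh k v) + y (k + 1) (Eh k v) = 0))"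

(* 1_a M_i  (i is a list of length r+t, entry k is i ! (k - 1)) *)
definition genspace ::
  "nat \<Rightarrow> (complex \<Rightarrow> 'm::ab_group_add \<Rightarrow> 'm) \<Rightarrow> (diag \<Rightarrow> 'm \<Rightarrow> 'm) \<Rightarrow> (nat \<Rightarrow> 'm \<Rightarrow> 'm)
     \<Rightarrow> bool list \<Rightarrow> complex list \<Rightarrow> 'm set" where
  "genspace n scale \<rho> y a i =
     {v. v \<in> range (Pa \<rho> a) \<and>
         (\<exists>N. \<forall>k\<in>{1..n}. ((\<lambda>x. y k x - scale (i ! (k - 1)) x) ^^ N) v = 0)}"

end

theory Submission
  imports Defs
begin

(* On 1_a M the operator s_k 1_a vanishes unless a_k = a_(k+1), and then, together with y_k and
   y_(k+1), it satisfies the degenerate affine Hecke relations y_k s = s y_(k+1) - 1 and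
   y_(k+1) s = s y_k + 1.  If i_k = i_(k+1), these relations show that s raises the nilpotency
   degrees of y_k - i_k and y_(k+1) - i_(k+1) only additively, so s preserves 1_a M_i.
   If i_k /= i_(k+1), then y_k - y_(k+1) is invertible on 1_a M_i, so v = (y_k - y_(k+1)) w with
   w in 1_a M_i and s v = phi w - w, where the intertwiner phi = s (y_k - y_(k+1)) + 1 exchanges
   y_k and y_(k+1) and hence maps 1_a M_i into 1_a M_(s_k i). *)

lemma additive_funpow:
  fixes f :: "'a::ab_group_add \<Rightarrow> 'a"
  shows "additive f \<Longrightarrow> additive (f ^^ n)"
  unfolding additive_def by (induction n) auto

lemma additive_diff_fun:
  fixes f g :: "'a::ab_group_add \<Rightarrow> 'b::ab_group_add"
  shows "additive f \<Longrightarrow> additive g \<Longrightarrow> additive (\<lambda>x. f x - g x)"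
  by (simp add: additive_def)

lemma module_hom_additive: "module_hom s1 s2 f \<Longrightarrow> additive f"
  by (simp add: additive_def module_hom.add)

lemma (in module) module_hom_funpow: "module_hom scale scale f \<Longrightarrow> module_hom scale scale (f ^^ n)"
  by (induction n) (simp_all add: module_hom_id module_hom_compose)

lemma funpow_eq_0_mono:
  fixes f :: "'a::ab_group_add \<Rightarrow> 'a"
  assumes f: "additive f" and "(f ^^ p) v = 0" and "p \<le> q"
  shows "(f ^^ q) v = 0"
proof -
  have "(f ^^ q) v = (f ^^ (q - p)) ((f ^^ p) v)"
    using \<open>p \<le> q\<close> by (metis funpow_add le_add_diff_inverse2 comp_apply)
  then show ?thesis
    using \<open>(f ^^ p) v = 0\<close> additive.zero[OF additive_funpow[OF f]] by simp
qed

lemma ex_common_nilpotency_index: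
  fixes T :: "'i \<Rightarrow> 'a::ab_group_add \<Rightarrow> 'a"
  assumes "finite J" and "\<And>j. j \<in> J \<Longrightarrow> additive (T j)"
  shows "(\<exists>N. \<forall>j\<in>J. (T j ^^ N) v = 0) \<longleftrightarrow> (\<forall>j\<in>J. \<exists>N. (T j ^^ N) v = 0)"
proof
  assume "\<forall>j\<in>J. \<exists>N. (T j ^^ N) v = 0"
  then obtain N where N: "\<And>j. j \<in> J \<Longrightarrow> (T j ^^ N j) v = 0" by metis
  have "(T j ^^ sum N J) v = 0" if "j \<in> J" for j
    using funpow_eq_0_mono[OF assms(2) N] member_le_sum[of j J N] that \<open>finite J\<close> by blast
  then show "\<exists>N. \<forall>j\<in>J. (T j ^^ N) v = 0" by blast
qed blast

lemma funpow_intertwine_on: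
  assumes GF: "\<And>u. u \<in> R \<Longrightarrow> G (F u) = F (H u)" and HR: "\<And>u. u \<in> R \<Longrightarrow> H u \<in> R"
    and "u \<in> R"
  shows "(G ^^ n) (F u) = F ((H ^^ n) u)"
proof (induction n)
  case (Suc n)
  have "(H ^^ n) u \<in> R" by (induction n) (simp_all add: HR \<open>u \<in> R\<close>)
  then show ?case using Suc GF by simp
qed simp

lemma funpow_eq_0_intertwined:
  assumes "additive F" and "\<And>u. u \<in> R \<Longrightarrow> G (F u) = F (H u)" and "\<And>u. u \<in> R \<Longrightarrow> H u \<in> R"
    and "u \<in> R" and "(H ^^ n) u = 0"
  shows "(G ^^ n) (F u) = 0"
  using funpow_intertwine_on[of R G F H u n] assms additive.zero by metis

lemma nilpotent_diff_of_commuting: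
  fixes A B :: "'a::ab_group_add \<Rightarrow> 'a"
  assumes A: "additive A" and B: "additive B" and AB: "\<And>u. A (B u) = B (A u)"
  shows "(A ^^ p) v = 0 \<Longrightarrow> (B ^^ q) v = 0 \<Longrightarrow> ((\<lambda>u. A u - B u) ^^ (p + q)) v = 0"
proof (induction "p + q" arbitrary: p q v)
  case (Suc m)
  let ?D = "\<lambda>u. A u - B u"
  have D: "additive (?D ^^ n)" for n by (intro additive_funpow additive_diff_fun A B)
  show ?case
  proof (cases "p = 0 \<or> q = 0")
    case True
    then have "v = 0" using Suc.prems by auto
    then show ?thesis using additive.zero[OF D] by simp
  next
    case False
    then obtain p' q' where p: "p = Suc p'" and q: "q = Suc q'" by (metis not0_implies_Suc)
    have "(A ^^ p') (A v) = 0"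
      using Suc.prems(1) p by (simp add: funpow_Suc_right del: funpow.simps)
    moreover have "(B ^^ q) (A v) = 0"
      using funpow_eq_0_intertwined[OF A, of UNIV B B v q] AB Suc.prems(2) by simp
    ultimately have Av: "(?D ^^ m) (A v) = 0" using Suc p by simp
    have "(B ^^ q') (B v) = 0"
      using Suc.prems(2) q by (simp add: funpow_Suc_right del: funpow.simps)
    moreover have "(A ^^ p) (B v) = 0"
      using funpow_eq_0_intertwined[OF B, of UNIV A A v p] AB Suc.prems(1) by simp
    ultimately have Bv: "(?D ^^ m) (B v) = 0" using Suc q by simp
    have "(?D ^^ Suc m) v = (?D ^^ m) (A v) - (?D ^^ m) (B v)"
      using additive.diff[OF D] by (simp add: funpow_Suc_right del: funpow.simps)
    then show ?thesis using Av Bv Suc.hyps(2) by simp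
  qed
qed simp

lemma Hecke_swap_preserves_joint_nilpotence:
  fixes s X Z :: "'a::ab_group_add \<Rightarrow> 'a"
  assumes s: "additive s" and X: "additive X" and Z: "additive Z"
    and XZ: "\<And>u. X (Z u) = Z (X u)"
    and RX: "\<And>u. u \<in> R \<Longrightarrow> X u \<in> R" and RZ: "\<And>u. u \<in> R \<Longrightarrow> Z u \<in> R"
    and Xs: "\<And>u. u \<in> R \<Longrightarrow> X (s u) = s (Z u) - u"
    and Zs: "\<And>u. u \<in> R \<Longrightarrow> Z (s u) = s (X u) + u"
  shows "v \<in> R \<Longrightarrow> (X ^^ p) v = 0 \<Longrightarrow> (Z ^^ q) v = 0 \<Longrightarrow>
    (X ^^ (p + q)) (s v) = 0 \<and> (Z ^^ (p + q)) (s v) = 0"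
proof (induction "p + q" arbitrary: p q v)
  case 0
  then show ?case using additive.zero[OF s] by simp
next
  case (Suc m)
  show ?case
  proof (cases "p = 0 \<or> q = 0")
    case True
    then have "v = 0" using Suc.prems by auto
    then show ?thesis
      using additive.zero[OF s] additive.zero[OF additive_funpow[OF X]]
        additive.zero[OF additive_funpow[OF Z]] by simp
  next
    case False
    then obtain p' q' where p: "p = Suc p'" and q: "q = Suc q'" by (metis not0_implies_Suc)
    have m: "m = p + q'" "m = p' + q" using Suc.hyps(2) p q by simp_all
    have "(X ^^ p) (Z v) = 0"
      using funpow_eq_0_intertwined[OF Z, of UNIV X X v p] XZ Suc.prems(2) by simp
    moreover have "(Z ^^ q') (Z v) = 0"
      using Suc.prems(3) q by (simp add: funpow_Suc_right del: funpow.simps)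
    ultimately have "(X ^^ m) (s (Z v)) = 0"
      unfolding m(1) using Suc.hyps(1)[OF m(1) RZ[OF Suc.prems(1)]] by blast
    moreover have "(X ^^ m) v = 0" using funpow_eq_0_mono[OF X Suc.prems(2)] m(1) by simp
    ultimately have "(X ^^ m) (s (Z v) - v) = 0"
      using additive.diff[OF additive_funpow[OF X]] by simp
    then have Xsv: "(X ^^ Suc m) (s v) = 0"
      using Xs Suc.prems(1) by (simp add: funpow_Suc_right del: funpow.simps)
    have "(Z ^^ q) (X v) = 0"
      using funpow_eq_0_intertwined[OF X, of UNIV Z Z v q] XZ Suc.prems(3) by simp
    moreover have "(X ^^ p') (X v) = 0"
      using Suc.prems(2) p by (simp add: funpow_Suc_right del: funpow.simps)
    ultimately have "(Z ^^ m) (s (X v)) = 0"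
      unfolding m(2) using Suc.hyps(1)[OF m(2) RX[OF Suc.prems(1)]] by blast
    moreover have "(Z ^^ m) v = 0" using funpow_eq_0_mono[OF Z Suc.prems(3)] m(2) by simp
    ultimately have "(Z ^^ m) (s (X v) + v) = 0"
      using additive.add[OF additive_funpow[OF Z]] by simp
    then have Zsv: "(Z ^^ Suc m) (s v) = 0"
      using Zs Suc.prems(1) by (simp add: funpow_Suc_right del: funpow.simps)
    show ?thesis using Xsv Zsv Suc.hyps(2) by simp
  qed
qed

lemma (in module) subspace_nilpotent_vectors:
  assumes f: "module_hom scale scale f"
  shows "subspace {v. \<exists>N. (f ^^ N) v = 0}"
  unfolding subspace_def
proof (intro conjI allI ballI; clarsimp)
  show "\<exists>N. (f ^^ N) 0 = 0" by (rule exI[of _ 0]) simp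
  fix u w N1 N2 assume u: "(f ^^ N1) u = 0" and w: "(f ^^ N2) w = 0"
  have "(f ^^ max N1 N2) u = 0" "(f ^^ max N1 N2) w = 0"
    using funpow_eq_0_mono[OF module_hom_additive[OF f]] u w by simp_all
  then show "\<exists>N. (f ^^ N) (u + w) = 0"
    using module_hom.add[OF module_hom_funpow[OF f]] by (intro exI[of _ "max N1 N2"]) simp
next
  fix c u N assume "(f ^^ N) u = 0"
  then show "\<exists>N. (f ^^ N) (scale c u) = 0"
    using module_hom.scale[OF module_hom_funpow[OF f]] by (intro exI[of _ N]) simp
qed

lemma scalar_plus_nilpotent_surjective:
  fixes scale :: "'a::field \<Rightarrow> 'm::ab_group_add \<Rightarrow> 'm"
  assumes D: "module_hom scale scale D" and Q: "module.subspace scale Q"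
    and DQ: "\<And>u. u \<in> Q \<Longrightarrow> D u \<in> Q" and c: "c \<noteq> 0"
    and "v \<in> Q" and "(D ^^ n) v = 0"
  shows "\<exists>w\<in>Q. scale c w + D w = v"
proof -
  interpret module_hom scale scale D by (rule D)
  show ?thesis
    using \<open>v \<in> Q\<close> \<open>(D ^^ n) v = 0\<close>
  proof (induction n arbitrary: v)
    case 0
    then show ?case using m1.subspace_0[OF Q] by (intro bexI[of _ 0]) simp_all
  next
    case (Suc n)
    have "(D ^^ n) (D v) = 0" using Suc.prems(2) by (simp add: funpow_Suc_right del: funpow.simps)
    then obtain w' where w': "w' \<in> Q" "scale c w' + D w' = D v"
      using Suc.IH Suc.prems(1) DQ by blast
    define w where "w = scale (inverse c) (v - w')"
    have "w \<in> Q"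
      unfolding w_def using Suc.prems(1) w'(1) Q by (simp add: m1.subspace_diff m1.subspace_scale)
    moreover have "scale c w = v - w'" using c by (simp add: w_def)
    moreover have "D w = w'"
    proof -
      have "D w = scale (inverse c) (D v - D w')" by (simp add: w_def scale diff)
      also have "D v - D w' = scale c w'" using w'(2) by (simp add: algebra_simps)
      finally show ?thesis using c by simp
    qed
    ultimately show ?case by (metis diff_add_cancel)
  qed
qed

lemma Seq_length: "a \<in> Seq r t \<Longrightarrow> length a = r + t"
  by (simp add: Seq_def)

lemma finite_Seq: "finite (Seq r t)"
proof (rule finite_subset)
  show "Seq r t \<subseteq> {xs. set xs \<subseteq> UNIV \<and> length xs = r + t}" by (auto simp: Seq_def)
  show "finite {xs. set xs \<subseteq> (UNIV :: bool set) \<and> length xs = r + t}"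
    by (rule finite_lists_length_eq) simp
qed

lemma is_diag_idd: "a \<in> Seq r t \<Longrightarrow> is_diag r t (idd a)"
  by (auto simp: is_diag_def idd_def dbot_def dtop_def dmat_def pts_def lab_def Seq_length)

lemma is_diag_sdiag:
  "a \<in> Seq r t \<Longrightarrow> a ! (k - 1) = a ! k \<Longrightarrow> k \<in> {1..<r + t} \<Longrightarrow> is_diag r t (sdiag k a)"
  by (auto simp: is_diag_def sdiag_def cross_mat_def sw_def dbot_def dtop_def dmat_def pts_def
      lab_def Seq_length)

lemma swapL_nth:
  "k \<in> {1..<length xs} \<Longrightarrow> j \<in> {1..length xs} \<Longrightarrow> swapL k xs ! (j - 1) = xs ! (sw k j - 1)"
  by (auto simp: swapL_def sw_def nth_list_update)

lemma sw_in_range: "k \<in> {1..<n} \<Longrightarrow> j \<in> {1..n} \<Longrightarrow> sw k j \<in> {1..n}"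
  by (auto simp: sw_def)

locale vbr_rep =
  fixes r t :: nat and \<omega> :: "nat \<Rightarrow> complex"
    and scale :: "complex \<Rightarrow> 'm::ab_group_add \<Rightarrow> 'm"
    and \<rho> :: "diag \<Rightarrow> 'm \<Rightarrow> 'm" and y :: "nat \<Rightarrow> 'm \<Rightarrow> 'm"
  assumes vbr_module: "vbr_module r t \<omega> scale \<rho> y"
begin

sublocale module scale
  using vbr_module unfolding vbr_module_def Let_def module_iff_vector_space by (elim conjE)

sublocale endo: module_pair scale scale ..

lemma rho_module_hom: "is_diag r t d \<Longrightarrow> module_hom scale scale (\<rho> d)"
  using vbr_module unfolding vbr_module_def Let_def linear_iff_module_hom by (elim conjE) blast

lemma rho_rho:
  "is_diag r t d1 \<Longrightarrow> is_diag r t d2 \<Longrightarrow> \<rho> d1 (\<rho> d2 v) =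
     (if dbot d1 = dtop d2 then scale (\<omega> 0 ^ nloops d1 d2) (\<rho> (dcomp d1 d2) v) else 0)"
  using vbr_module unfolding vbr_module_def Let_def by (elim conjE) blast

lemma sum_Pa: "(\<Sum>a\<in>Seq r t. Pa \<rho> a v) = v"
  using vbr_module unfolding vbr_module_def Let_def by blast

lemma y_module_hom: "j \<in> {1..r + t} \<Longrightarrow> module_hom scale scale (y j)"
  using vbr_module unfolding vbr_module_def Let_def linear_iff_module_hom by (elim conjE) blast

lemma y_commute: "j \<in> {1..r + t} \<Longrightarrow> l \<in> {1..r + t} \<Longrightarrow> y j (y l v) = y l (y j v)"
  using vbr_module unfolding vbr_module_def Let_def commute_ops_def by (elim conjE) blast

lemma y_Pa_commute: "j \<in> {1..r + t} \<Longrightarrow> a \<in> Seq r t \<Longrightarrow> y j (Pa \<rho> a v) = Pa \<rho> a (y j v)"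
  using vbr_module unfolding vbr_module_def Let_def commute_ops_def by (elim conjE) blast

lemma y_Sop_commute:
  "j \<in> {1..r + t} \<Longrightarrow> k \<in> {1..<r + t} \<Longrightarrow> j \<noteq> k \<Longrightarrow> j \<noteq> k + 1 \<Longrightarrow>
     y j (Sop r t \<rho> k v) = Sop r t \<rho> k (y j v)"
  using vbr_module unfolding vbr_module_def Let_def commute_ops_def by (elim conjE) blast

lemma Sop_y_Pa_relations:
  assumes "k \<in> {1..<r + t}" and "a \<in> Seq r t" and "a ! (k - 1) = a ! k"
  shows "Sop r t \<rho> k (y k (Pa \<rho> a v)) - y (k + 1) (Sop r t \<rho> k (Pa \<rho> a v)) = - Pa \<rho> a v"
    and "Sop r t \<rho> k (y (k + 1) (Pa \<rho> a v)) - y k (Sop r t \<rho> k (Pa \<rho> a v)) = Pa \<rho> a v"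
proof -
  have "\<forall>k\<in>{1..<r + t}. \<forall>a\<in>Seq r t. a ! (k - 1) = a ! k \<longrightarrow>
      (\<forall>v. Sop r t \<rho> k (y k (Pa \<rho> a v)) - y (k + 1) (Sop r t \<rho> k (Pa \<rho> a v)) = - Pa \<rho> a v \<and>
           Sop r t \<rho> k (y (k + 1) (Pa \<rho> a v)) - y k (Sop r t \<rho> k (Pa \<rho> a v)) = Pa \<rho> a v)"
    using vbr_module unfolding vbr_module_def Let_def by (elim conjE) assumption
  then show "Sop r t \<rho> k (y k (Pa \<rho> a v)) - y (k + 1) (Sop r t \<rho> k (Pa \<rho> a v)) = - Pa \<rho> a v"
    and "Sop r t \<rho> k (y (k + 1) (Pa \<rho> a v)) - y k (Sop r t \<rho> k (Pa \<rho> a v)) = Pa \<rho> a v"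
    using assms by blast+
qed

lemma Pa_module_hom: "a \<in> Seq r t \<Longrightarrow> module_hom scale scale (Pa \<rho> a)"
  unfolding Pa_def by (rule rho_module_hom[OF is_diag_idd])

lemma subspace_range_Pa: "a \<in> Seq r t \<Longrightarrow> subspace (range (Pa \<rho> a))"
  using module_hom.subspace_image[OF Pa_module_hom subspace_UNIV] by simp

lemma y_range_Pa: "j \<in> {1..r + t} \<Longrightarrow> a \<in> Seq r t \<Longrightarrow> u \<in> range (Pa \<rho> a) \<Longrightarrow> y j u \<in> range (Pa \<rho> a)"
  by (auto simp: y_Pa_commute)

lemma Sop_range_Pa:
  assumes k: "k \<in> {1..<r + t}" and a: "a \<in> Seq r t" and u: "u \<in> range (Pa \<rho> a)"
  shows "Sop r t \<rho> k u = (if a ! (k - 1) = a ! k then \<rho> (sdiag k a) u else 0)"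
proof -
  obtain w where w: "u = \<rho> (idd a) w" using u unfolding Pa_def by blast
  let ?f = "\<lambda>b. if b ! (k - 1) = b ! k then \<rho> (sdiag k b) u else 0"
  have "?f b = 0" if b: "b \<in> Seq r t - {a}" for b
    using rho_rho[OF is_diag_sdiag[of b r t k] is_diag_idd[OF a], of w] b k w
    by (auto simp: sdiag_def idd_def dbot_def dtop_def)
  then have "sum ?f (Seq r t - {a}) = 0" by (intro sum.neutral) blast
  then show ?thesis unfolding Sop_def using sum.remove[OF finite_Seq a, of ?f] by simp
qed

lemma sdiag_range_Pa:
  assumes k: "k \<in> {1..<r + t}" and a: "a \<in> Seq r t" and a_eq: "a ! (k - 1) = a ! k"
  shows "\<rho> (sdiag k a) u \<in> range (Pa \<rho> a)"
proof -
  let ?f = "\<lambda>b. Pa \<rho> b (\<rho> (sdiag k a) u)"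
  have "?f b = 0" if b: "b \<in> Seq r t - {a}" for b
    using rho_rho[OF is_diag_idd[of b r t] is_diag_sdiag[OF a a_eq k]] b
    by (auto simp: Pa_def sdiag_def idd_def dbot_def dtop_def)
  then have "sum ?f (Seq r t - {a}) = 0" by (intro sum.neutral) blast
  then have "\<rho> (sdiag k a) u = ?f a"
    using sum_Pa[of "\<rho> (sdiag k a) u"] sum.remove[OF finite_Seq a, of ?f] by simp
  then show ?thesis by (metis rangeI)
qed

lemma sdiag_y_relations:
  assumes k: "k \<in> {1..<r + t}" and a: "a \<in> Seq r t" and a_eq: "a ! (k - 1) = a ! k"
    and u: "u \<in> range (Pa \<rho> a)"
  shows "y k (\<rho> (sdiag k a) u) = \<rho> (sdiag k a) (y (k + 1) u) - u"
    and "y (k + 1) (\<rho> (sdiag k a) u) = \<rho> (sdiag k a) (y k u) + u"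
proof -
  have k': "k \<in> {1..r + t}" "k + 1 \<in> {1..r + t}" using k by auto
  obtain w where w: "u = Pa \<rho> a w" using u by blast
  have S: "Sop r t \<rho> k u' = \<rho> (sdiag k a) u'" if "u' \<in> range (Pa \<rho> a)" for u'
    using Sop_range_Pa[OF k a that] a_eq by simp
  note rel = Sop_y_Pa_relations[OF k a a_eq, of w, folded w]
  show "y k (\<rho> (sdiag k a) u) = \<rho> (sdiag k a) (y (k + 1) u) - u"
    using rel(2) unfolding S[OF u] S[OF y_range_Pa[OF k'(2) a u]] by (simp add: algebra_simps)
  show "y (k + 1) (\<rho> (sdiag k a) u) = \<rho> (sdiag k a) (y k u) + u"
    using rel(1) unfolding S[OF u] S[OF y_range_Pa[OF k'(1) a u]] by (simp add: algebra_simps)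
qed

lemma sdiag_y_commute:
  assumes k: "k \<in> {1..<r + t}" and a: "a \<in> Seq r t" and a_eq: "a ! (k - 1) = a ! k"
    and j: "j \<in> {1..r + t}" "j \<noteq> k" "j \<noteq> k + 1" and u: "u \<in> range (Pa \<rho> a)"
  shows "y j (\<rho> (sdiag k a) u) = \<rho> (sdiag k a) (y j u)"
  using y_Sop_commute[OF j(1) k j(2,3), of u] Sop_range_Pa[OF k a u]
    Sop_range_Pa[OF k a y_range_Pa[OF j(1) a u]] a_eq
  by simp

definition y_shift :: "complex list \<Rightarrow> nat \<Rightarrow> 'm \<Rightarrow> 'm" where
  "y_shift i j x = y j x - scale (i ! (j - 1)) x"

lemma y_shift_module_hom:
  assumes "j \<in> {1..r + t}"
  shows "module_hom scale scale (y_shift i j)"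
  unfolding y_shift_def[abs_def]
  by (rule endo.module_hom_sub[OF y_module_hom[OF assms] module_hom_scale_self])

lemma y_y_shift_commute:
  assumes j: "j \<in> {1..r + t}" and l: "l \<in> {1..r + t}"
  shows "y j (y_shift i l u) = y_shift i l (y j u)"
  unfolding y_shift_def module_hom.diff[OF y_module_hom[OF j]]
    module_hom.scale[OF y_module_hom[OF j]] y_commute[OF j l] ..

lemma y_shift_commute:
  assumes j: "j \<in> {1..r + t}" and l: "l \<in> {1..r + t}"
  shows "y_shift i j (y_shift i' l u) = y_shift i' l (y_shift i j u)"
  unfolding y_shift_def[of i j] module_hom.diff[OF y_shift_module_hom[OF l]]
    module_hom.scale[OF y_shift_module_hom[OF l]] y_y_shift_commute[OF j l] ..

lemma y_shift_range_Pa: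
  "j \<in> {1..r + t} \<Longrightarrow> a \<in> Seq r t \<Longrightarrow> u \<in> range (Pa \<rho> a) \<Longrightarrow> y_shift i j u \<in> range (Pa \<rho> a)"
  unfolding y_shift_def by (intro subspace_diff subspace_scale subspace_range_Pa y_range_Pa)

abbreviation gen_weight_space :: "bool list \<Rightarrow> complex list \<Rightarrow> 'm set" where
  "gen_weight_space \<equiv> genspace (r + t) scale \<rho> y"

lemma gen_weight_space_iff:
  "v \<in> gen_weight_space a i \<longleftrightarrow>
     v \<in> range (Pa \<rho> a) \<and> (\<forall>j\<in>{1..r + t}. \<exists>N. (y_shift i j ^^ N) v = 0)"
proof -
  have "(\<lambda>x. y j x - scale (i ! (j - 1)) x) = y_shift i j" for j
    by (simp add: fun_eq_iff y_shift_def)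
  moreover have "(\<exists>N. \<forall>j\<in>{1..r + t}. (y_shift i j ^^ N) v = 0) \<longleftrightarrow>
      (\<forall>j\<in>{1..r + t}. \<exists>N. (y_shift i j ^^ N) v = 0)"
    by (rule ex_common_nilpotency_index[OF finite_atLeastAtMost
          module_hom_additive[OF y_shift_module_hom]])
  ultimately show ?thesis unfolding genspace_def by simp
qed

lemma subspace_gen_weight_space:
  assumes "a \<in> Seq r t"
  shows "subspace (gen_weight_space a i)"
proof -
  have "gen_weight_space a i = range (Pa \<rho> a) \<inter> (\<Inter>j\<in>{1..r + t}. {v. \<exists>N. (y_shift i j ^^ N) v = 0})"
    by (auto simp: gen_weight_space_iff)
  moreover have "subspace (\<Inter>j\<in>{1..r + t}. {v. \<exists>N. (y_shift i j ^^ N) v = 0})"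
    by (auto intro!: subspace_Int subspace_nilpotent_vectors y_shift_module_hom)
  ultimately show ?thesis
    using subspace_range_Pa[OF assms] by (simp add: subspace_inter)
qed

lemma y_gen_weight_space:
  assumes j: "j \<in> {1..r + t}" and a: "a \<in> Seq r t" and u: "u \<in> gen_weight_space a i"
  shows "y j u \<in> gen_weight_space a i"
  unfolding gen_weight_space_iff
proof (intro conjI ballI)
  show "y j u \<in> range (Pa \<rho> a)" using y_range_Pa[OF j a] u unfolding gen_weight_space_iff by blast
  fix l assume l: "l \<in> {1..r + t}"
  then obtain N where "(y_shift i l ^^ N) u = 0" using u unfolding gen_weight_space_iff by blast
  then have "(y_shift i l ^^ N) (y j u) = 0"
    using funpow_eq_0_intertwined[OF module_hom_additive[OF y_module_hom[OF j]],
        of UNIV "y_shift i l" "y_shift i l" u N]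
    by (simp add: y_y_shift_commute[OF j l])
  then show "\<exists>N. (y_shift i l ^^ N) (y j u) = 0" ..
qed

lemma y_shift_gen_weight_space:
  "j \<in> {1..r + t} \<Longrightarrow> a \<in> Seq r t \<Longrightarrow> u \<in> gen_weight_space a i \<Longrightarrow>
     y_shift i' j u \<in> gen_weight_space a i"
  unfolding y_shift_def
  by (intro subspace_diff subspace_scale subspace_gen_weight_space y_gen_weight_space)


lemma sdiag_gen_weight_space:
  assumes k: "k \<in> {1..<r + t}" and a: "a \<in> Seq r t" and a_eq: "a ! (k - 1) = a ! k"
    and i_eq: "i ! (k - 1) = i ! k" and v: "v \<in> gen_weight_space a i"
  shows "\<rho> (sdiag k a) v \<in> gen_weight_space a i"
proof -
  let ?s = "\<rho> (sdiag k a)" and ?R = "range (Pa \<rho> a)"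
  have s: "module_hom scale scale ?s" by (rule rho_module_hom[OF is_diag_sdiag[OF a a_eq k]])
  have k': "k \<in> {1..r + t}" "k + 1 \<in> {1..r + t}" using k by auto
  have vR: "v \<in> ?R" using v unfolding gen_weight_space_iff by blast
  have nil: "\<exists>N. (y_shift i j ^^ N) v = 0" if "j \<in> {1..r + t}" for j
    using v that unfolding gen_weight_space_iff by blast
  have "\<exists>N. (y_shift i j ^^ N) (?s v) = 0" if j: "j \<in> {1..r + t}" for j
  proof (cases "j = k \<or> j = k + 1")
    case True
    obtain p q where p: "(y_shift i k ^^ p) v = 0" and q: "(y_shift i (k + 1) ^^ q) v = 0"
      using nil k' by blast
    have "(y_shift i k ^^ (p + q)) (?s v) = 0 \<and> (y_shift i (k + 1) ^^ (p + q)) (?s v) = 0"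
    proof (rule Hecke_swap_preserves_joint_nilpotence[where R = ?R, OF _ _ _ _ _ _ _ _ vR p q])
      show "additive ?s" by (rule module_hom_additive[OF s])
      show "additive (y_shift i k)" "additive (y_shift i (k + 1))"
        by (rule module_hom_additive[OF y_shift_module_hom], fact k')+
      show "y_shift i k (y_shift i (k + 1) u) = y_shift i (k + 1) (y_shift i k u)" for u
        by (rule y_shift_commute[OF k'])
      show "y_shift i k u \<in> ?R" "y_shift i (k + 1) u \<in> ?R" if "u \<in> ?R" for u
        by (rule y_shift_range_Pa[OF k'(1) a that], rule y_shift_range_Pa[OF k'(2) a that])
      show "y_shift i k (?s u) = ?s (y_shift i (k + 1) u) - u"
        and "y_shift i (k + 1) (?s u) = ?s (y_shift i k u) + u" if "u \<in> ?R" for u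
        using sdiag_y_relations[OF k a a_eq that] i_eq
        by (simp_all add: y_shift_def module_hom.diff[OF s] module_hom.scale[OF s] algebra_simps)
    qed
    then show ?thesis using True by blast
  next
    case False
    have commute: "y_shift i j (?s u) = ?s (y_shift i j u)" if "u \<in> ?R" for u
      using sdiag_y_commute[OF k a a_eq j _ _ that] False
      by (simp add: y_shift_def module_hom.diff[OF s] module_hom.scale[OF s])
    obtain N where "(y_shift i j ^^ N) v = 0" using nil[OF j] by blast
    then have "(y_shift i j ^^ N) (?s v) = 0"
      using funpow_eq_0_intertwined[of ?s ?R "y_shift i j" "y_shift i j" v N]
        module_hom_additive[OF s] commute y_shift_range_Pa[OF j a] vR by blast
    then show ?thesis ..
  qed
  then show ?thesis using sdiag_range_Pa[OF k a a_eq] unfolding gen_weight_space_iff by blast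
qed

text \<open>The intertwining element of the degenerate affine Hecke algebra, on \<open>1\<^sub>a M\<close>.\<close>
definition intertwiner :: "nat \<Rightarrow> bool list \<Rightarrow> 'm \<Rightarrow> 'm" where
  "intertwiner k a u = \<rho> (sdiag k a) (y k u - y (k + 1) u) + u"

lemma intertwiner_module_hom:
  assumes k: "k \<in> {1..<r + t}" and a: "a \<in> Seq r t" and a_eq: "a ! (k - 1) = a ! k"
  shows "module_hom scale scale (intertwiner k a)"
proof -
  have k': "k \<in> {1..r + t}" "k + 1 \<in> {1..r + t}" using k by auto
  have "module_hom scale scale (\<lambda>u. \<rho> (sdiag k a) (y k u - y (k + 1) u))"
    using module_hom_compose[OF
        endo.module_hom_sub[OF y_module_hom[OF k'(1)] y_module_hom[OF k'(2)]]
        rho_module_hom[OF is_diag_sdiag[OF a a_eq k]]]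
    by (simp add: comp_def)
  then show ?thesis
    unfolding intertwiner_def[abs_def] by (rule endo.module_hom_add[OF _ module_hom_ident])
qed

lemma intertwiner_range_Pa:
  "k \<in> {1..<r + t} \<Longrightarrow> a \<in> Seq r t \<Longrightarrow> a ! (k - 1) = a ! k \<Longrightarrow> u \<in> range (Pa \<rho> a) \<Longrightarrow>
     intertwiner k a u \<in> range (Pa \<rho> a)"
  unfolding intertwiner_def by (intro subspace_add subspace_range_Pa sdiag_range_Pa)

lemma y_intertwiner:
  assumes k: "k \<in> {1..<r + t}" and a: "a \<in> Seq r t" and a_eq: "a ! (k - 1) = a ! k"
    and j: "j \<in> {1..r + t}" and u: "u \<in> range (Pa \<rho> a)"
  shows "y j (intertwiner k a u) = intertwiner k a (y (sw k j) u)"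
proof -
  let ?s = "\<rho> (sdiag k a)" and ?d = "y k u - y (k + 1) u"
  have k': "k \<in> {1..r + t}" "k + 1 \<in> {1..r + t}" using k by auto
  note y_hom = module_hom.add[OF y_module_hom] module_hom.diff[OF y_module_hom]
  have d: "?d \<in> range (Pa \<rho> a)" by (intro subspace_diff subspace_range_Pa y_range_Pa k' a u)
  consider "j = k" | "j = k + 1" | "j \<noteq> k" "j \<noteq> k + 1" by blast
  then show ?thesis
  proof cases
    case 1
    have "y k (intertwiner k a u) = ?s (y (k + 1) ?d) - ?d + y k u"
      using sdiag_y_relations(1)[OF k a a_eq d] k' by (simp add: intertwiner_def y_hom)
    also have "\<dots> = intertwiner k a (y (k + 1) u)"
      using k' by (simp add: intertwiner_def y_hom y_commute[OF k'(1) k'(2), simplified])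
    finally show ?thesis using 1 by (simp add: sw_def)
  next
    case 2
    have "y (k + 1) (intertwiner k a u) = ?s (y k ?d) + ?d + y (k + 1) u"
      using sdiag_y_relations(2)[OF k a a_eq d] k' by (simp add: intertwiner_def y_hom)
    also have "\<dots> = intertwiner k a (y k u)"
      using k' by (simp add: intertwiner_def y_hom y_commute[OF k'(1) k'(2), simplified])
    finally show ?thesis using 2 by (simp add: sw_def)
  next
    case 3
    have "y j (intertwiner k a u) = ?s (y j ?d) + y j u"
      using sdiag_y_commute[OF k a a_eq j 3 d]
      by (simp add: intertwiner_def module_hom.add[OF y_module_hom[OF j]])
    also have "y j ?d = y k (y j u) - y (k + 1) (y j u)"
      by (simp add: module_hom.diff[OF y_module_hom[OF j]] y_commute[OF j k'(1)]
          y_commute[OF j k'(2), simplified])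
    finally show ?thesis using 3 by (simp add: intertwiner_def sw_def)
  qed
qed

lemma y_shift_intertwiner:
  assumes k: "k \<in> {1..<r + t}" and a: "a \<in> Seq r t" and a_eq: "a ! (k - 1) = a ! k"
    and i: "length i = r + t" and j: "j \<in> {1..r + t}" and u: "u \<in> range (Pa \<rho> a)"
  shows "y_shift (swapL k i) j (intertwiner k a u) = intertwiner k a (y_shift i (sw k j) u)"
  using y_intertwiner[OF k a a_eq j u] swapL_nth[of k i j] k i j
  by (simp add: y_shift_def module_hom.diff[OF intertwiner_module_hom[OF k a a_eq]]
      module_hom.scale[OF intertwiner_module_hom[OF k a a_eq]])

lemma sdiag_gen_weight_space_split:
  assumes k: "k \<in> {1..<r + t}" and a: "a \<in> Seq r t" and a_eq: "a ! (k - 1) = a ! k"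
    and i: "length i = r + t" and i_ne: "i ! (k - 1) \<noteq> i ! k" and v: "v \<in> gen_weight_space a i"
  shows "\<exists>u w. \<rho> (sdiag k a) v = u + w \<and>
    u \<in> gen_weight_space a i \<and> w \<in> gen_weight_space a (swapL k i)"
proof -
  let ?R = "range (Pa \<rho> a)" and ?D = "\<lambda>u. y_shift i k u - y_shift i (k + 1) u"
  have k': "k \<in> {1..r + t}" "k + 1 \<in> {1..r + t}" using k by auto
  have nil: "\<exists>N. (y_shift i j ^^ N) v = 0" if "j \<in> {1..r + t}" for j
    using v that unfolding gen_weight_space_iff by blast
  obtain p where "(y_shift i k ^^ p) v = 0" using nil[OF k'(1)] ..
  moreover obtain q where "(y_shift i (k + 1) ^^ q) v = 0" using nil[OF k'(2)] ..
  ultimately have D_nil: "(?D ^^ (p + q)) v = 0"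
    by (rule nilpotent_diff_of_commuting[of "y_shift i k" "y_shift i (k + 1)",
          OF module_hom_additive[OF y_shift_module_hom[OF k'(1)]]
          module_hom_additive[OF y_shift_module_hom[OF k'(2)]] y_shift_commute[OF k']])
  have D: "module_hom scale scale ?D"
    by (rule endo.module_hom_sub[OF y_shift_module_hom[OF k'(1)] y_shift_module_hom[OF k'(2)]])
  have D_inv: "?D u \<in> gen_weight_space a i" if "u \<in> gen_weight_space a i" for u
    by (rule subspace_diff[OF subspace_gen_weight_space[OF a]
          y_shift_gen_weight_space[OF k'(1) a that] y_shift_gen_weight_space[OF k'(2) a that]])
  have "i ! (k - 1) - i ! k \<noteq> 0" using i_ne by simp
  then obtain w where w: "w \<in> gen_weight_space a i"
    and "scale (i ! (k - 1) - i ! k) w + ?D w = v"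
    using scalar_plus_nilpotent_surjective[OF D subspace_gen_weight_space[OF a] D_inv _ v D_nil]
    by blast
  then have "y k w - y (k + 1) w = v" by (simp add: y_shift_def scale_left_diff_distrib)
  then have "\<rho> (sdiag k a) v = - w + intertwiner k a w" by (simp add: intertwiner_def)
  moreover have "- w \<in> gen_weight_space a i"
    by (rule subspace_neg[OF subspace_gen_weight_space[OF a] w])
  moreover have "intertwiner k a w \<in> gen_weight_space a (swapL k i)"
    unfolding gen_weight_space_iff
  proof (intro conjI ballI)
    have wR: "w \<in> ?R" using w unfolding gen_weight_space_iff by blast
    then show "intertwiner k a w \<in> ?R" by (rule intertwiner_range_Pa[OF k a a_eq])
    fix j assume j: "j \<in> {1..r + t}"
    then obtain N where "(y_shift i (sw k j) ^^ N) w = 0"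
      using w sw_in_range[OF k] unfolding gen_weight_space_iff by blast
    then have "(y_shift (swapL k i) j ^^ N) (intertwiner k a w) = 0"
      using funpow_eq_0_intertwined[of "intertwiner k a" ?R "y_shift (swapL k i) j"
          "y_shift i (sw k j)" w N]
        module_hom_additive[OF intertwiner_module_hom[OF k a a_eq]]
        y_shift_intertwiner[OF k a a_eq i j] y_shift_range_Pa[OF sw_in_range[OF k j] a] wR by blast
    then show "\<exists>N. (y_shift (swapL k i) j ^^ N) (intertwiner k a w) = 0" ..
  qed
  ultimately show ?thesis by blast
qed

theorem Sop_gen_weight_space:
  assumes k: "k \<in> {1..<r + t}" and a: "a \<in> Seq r t" and i: "length i = r + t"
    and v: "v \<in> gen_weight_space a i"
  shows "Sop r t \<rho> k v \<in>
    {u + w | u w. u \<in> gen_weight_space a i \<and> w \<in> gen_weight_space a (swapL k i)}"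
proof -
  have zero: "0 \<in> gen_weight_space a i'" for i'
    by (rule subspace_0[OF subspace_gen_weight_space[OF a]])
  have S: "Sop r t \<rho> k v = (if a ! (k - 1) = a ! k then \<rho> (sdiag k a) v else 0)"
    using Sop_range_Pa[OF k a] v unfolding gen_weight_space_iff by blast
  consider "a ! (k - 1) \<noteq> a ! k" | "a ! (k - 1) = a ! k" "i ! (k - 1) = i ! k"
    | "a ! (k - 1) = a ! k" "i ! (k - 1) \<noteq> i ! k" by blast
  then show ?thesis
  proof cases
    case 1
    then have "Sop r t \<rho> k v = 0 + 0" using S by simp
    then show ?thesis using zero by blast
  next
    case 2
    then have "Sop r t \<rho> k v = \<rho> (sdiag k a) v + 0" using S by simp
    then show ?thesis using zero sdiag_gen_weight_space[OF k a 2 v] by blast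
  next
    case 3
    then show ?thesis using S sdiag_gen_weight_space_split[OF k a 3(1) i 3(2) v] by auto
  qed
qed

end

theorem lemma3p1:
  fixes r t :: nat and \<omega> :: "nat \<Rightarrow> complex"
    and scale :: "complex \<Rightarrow> 'm::ab_group_add \<Rightarrow> 'm"
    and \<rho> :: "diag \<Rightarrow> 'm \<Rightarrow> 'm" and y :: "nat \<Rightarrow> 'm \<Rightarrow> 'm"
  assumes "vbr_module r t \<omega> scale \<rho> y"
  shows "\<forall>k\<in>{1..<r + t}. \<forall>a\<in>Seq r t. \<forall>i::complex list. length i = r + t \<longrightarrow>
           (\<forall>v\<in>genspace (r + t) scale \<rho> y a i.
              Sop r t \<rho> k v \<in> {u + w | u w. u \<in> genspace (r + t) scale \<rho> y a i \<and>
                                            w \<in> genspace (r + t) scale \<rho> y a (swapL k i)})"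
proof -
  interpret vbr_rep r t \<omega> scale \<rho> y by (rule vbr_rep.intro) (rule assms)
  show ?thesis using Sop_gen_weight_space by blast
qed

end
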